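(* Let $\mathcal{G}$ be the Galilei group of transformations of $\mathbb{R}^4=\mathbb{R}^3\times\mathbb{R}$ of the form $x\mapsto \begin{pmatrix} S & w\\ 0^T & 1\end{pmatrix}x+b$ ($S\in SO(3)$, $w\in\mathbb{R}^3$, $b\in\mathbb{R}^4$), and let $C\mathcal{G}$ be the conformal Galilei group of transformations $x\mapsto \lambda\begin{pmatrix} S & w\\ 0^T & 1\end{pmatrix}x+b$ with additionally $\lambda>0$. Standard Newtonian simultaneity, i.e. the relation $(\mathbf{x},x^4)\sim(\mathbf{y},y^4)\iff x^4=y^4$, is the only nontrivial $\mathcal{G}$-invariant equivalence relation on $\mathbb{R}^4$ such that either (i) its equivalence classes are connected subspaces of $\mathbb{R}^4$, or (ii) it is $C\mathcal{G}$-invariant.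
   Context: An equivalence relation $\sim$ is invariant under a group of transformations if $x\sim y$ implies $g(x)\sim g(y)$ for all $x,y$ and all $g$ in the group. It is trivial if it is the total relation or the identity relation (diagonal). *)

theory Defs
  imports "HOL-Analysis.Analysis"
begin

text \<open>Points of R^4 = R^3 x R, written as pairs (spatial part, time coordinate).\<close>
type_synonym pt = "(real^3) \<times> real"

definition SO3 :: "(real^3^3) set" where
  "SO3 = {S. orthogonal_matrix S \<and> det S = 1}"

text \<open>The map x |-> [[S, w],[0^T, 1]] x + b, with b = (bs, bt).\<close>
definition galilei_map :: "real^3^3 \<Rightarrow> real^3 \<Rightarrow> real^3 \<Rightarrow> real \<Rightarrow> pt \<Rightarrow> pt" where
  "galilei_map S w bs bt = (\<lambda>(p, t). (S *v p + t *\<^sub>R w + bs, t + bt))"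

definition galilei_group :: "(pt \<Rightarrow> pt) set" where
  "galilei_group = {galilei_map S w bs bt | S w bs bt. S \<in> SO3}"

definition conf_galilei_map :: "real \<Rightarrow> real^3^3 \<Rightarrow> real^3 \<Rightarrow> real^3 \<Rightarrow> real \<Rightarrow> pt \<Rightarrow> pt" where
  "conf_galilei_map l S w bs bt =
     (\<lambda>(p, t). (l *\<^sub>R (S *v p + t *\<^sub>R w) + bs, l * t + bt))"

definition conf_galilei_group :: "(pt \<Rightarrow> pt) set" where
  "conf_galilei_group = {conf_galilei_map l S w bs bt | l S w bs bt. l > 0 \<and> S \<in> SO3}"

definition invariant_under :: "('a \<Rightarrow> 'a) set \<Rightarrow> ('a \<Rightarrow> 'a \<Rightarrow> bool) \<Rightarrow> bool" where
  "invariant_under G R \<longleftrightarrow> (\<forall>g\<in>G. \<forall>x y. R x y \<longrightarrow> R (g x) (g y))"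

definition trivial_rel :: "('a \<Rightarrow> 'a \<Rightarrow> bool) \<Rightarrow> bool" where
  "trivial_rel R \<longleftrightarrow> R = (\<lambda>x y. True) \<or> R = (\<lambda>x y. x = y)"

definition newtonian_sim :: "pt \<Rightarrow> pt \<Rightarrow> bool" where
  "newtonian_sim x y \<longleftrightarrow> snd x = snd y"

end

theory Submission
  imports Defs
begin

text \<open>
  Translation invariance reduces an invariant equivalence relation to the additive subgroup
  \<open>H\<close> of differences equivalent to the origin, and the boosts and rotations act on \<open>H\<close>.
  If \<open>H\<close> contains a vector with nonzero time component, boosts spread it over a whole
  time slice, so \<open>H\<close> contains all of space and is \<open>\<real>\<^sup>3 \<times> T\<close> for a subgroup \<open>T \<noteq> {0}\<close> of
  the reals; connectedness of the classes, or invariance under dilations, forces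
  \<open>T = \<real>\<close>, i.e. the total relation. Otherwise \<open>H\<close> is a rotation invariant subgroup of
  space, which is either \<open>{0}\<close> (the identity relation) or all of space (simultaneity),
  since rotations of one nonzero vector sum to a whole interval on each line.
\<close>

locale add_subgroup =
  fixes A :: "'a::ab_group_add set"
  assumes zero_mem: "0 \<in> A"
    and add_mem: "x \<in> A \<Longrightarrow> y \<in> A \<Longrightarrow> x + y \<in> A"
    and uminus_mem: "x \<in> A \<Longrightarrow> - x \<in> A"
begin

lemma diff_mem: "x \<in> A \<Longrightarrow> y \<in> A \<Longrightarrow> x - y \<in> A"
  using add_mem[of x "- y"] uminus_mem[of y] by simp

end

lemma add_subgroup_vimage:
  fixes f :: "'a::ab_group_add \<Rightarrow> 'b::ab_group_add"
  assumes "add_subgroup A" and f_add: "\<And>x y. f (x + y) = f x + f y"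
  shows "add_subgroup (f -` A)"
proof -
  interpret add_subgroup A by fact
  have f_zero: "f 0 = 0"
    using f_add[of 0 0] by simp
  have f_uminus: "f (- x) = - f x" for x
    using f_add[of "- x" x] f_zero by (simp add: eq_neg_iff_add_eq_0)
  show ?thesis
    by unfold_locales (auto simp: f_zero f_uminus f_add intro: zero_mem add_mem uminus_mem)
qed

lemma add_subgroup_real_eq_UNIV_if_interval:
  fixes T :: "real set"
  assumes "add_subgroup T" and "e > 0" and interval: "{0..e} \<subseteq> T"
  shows "T = UNIV"
proof -
  interpret add_subgroup T by fact
  have mult_mem: "real n * x \<in> T" if "x \<in> T" for n x
  proof (induction n)
    case 0
    then show ?case using zero_mem by simp
  next
    case (Suc n)
    then show ?case using add_mem[OF that Suc] by (simp add: distrib_right)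
  qed
  have "s \<in> T" for s
  proof -
    obtain n :: nat where n: "\<bar>s\<bar> / e < real n"
      using reals_Archimedean2 by blast
    moreover have "\<bar>s\<bar> / e \<ge> 0"
      using \<open>e > 0\<close> by simp
    ultimately have "real n > 0" "\<bar>s\<bar> < real n * e"
      using \<open>e > 0\<close> by (linarith, simp add: divide_less_eq)
    then have "\<bar>s / real n\<bar> \<in> T"
      using interval by (auto simp: field_simps)
    then have "s / real n \<in> T"
      using uminus_mem[of "\<bar>s / real n\<bar>"] by (cases "s \<ge> 0") auto
    from mult_mem[OF this, of n] show ?thesis
      using \<open>real n > 0\<close> by simp
  qed
  then show ?thesis by blast
qed

lemma add_subgroup_abs_mem:
  fixes A :: "'a::{linordered_ab_group_add, abs_if} set"
  assumes "add_subgroup A" "x \<in> A"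
  shows "\<bar>x\<bar> \<in> A"
  using assms add_subgroup.uminus_mem by (cases "x < 0") (simp_all add: abs_if)

lemma add_subgroup_real_eq_UNIV_if_connected:
  fixes T :: "real set"
  assumes "add_subgroup T" "connected T" "t \<in> T" "t \<noteq> 0"
  shows "T = UNIV"
proof (rule add_subgroup_real_eq_UNIV_if_interval[where e = "\<bar>t\<bar>"])
  show "{0..\<bar>t\<bar>} \<subseteq> T"
    using connected_contains_Icc[OF \<open>connected T\<close> add_subgroup.zero_mem add_subgroup_abs_mem]
      assms by blast
qed (use assms in auto)

lemma add_subgroup_real_eq_UNIV_if_cone:
  fixes T :: "real set"
  assumes "add_subgroup T" and cone: "\<And>l x. l > 0 \<Longrightarrow> x \<in> T \<Longrightarrow> l * x \<in> T"
    and "t \<in> T" "t \<noteq> 0"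
  shows "T = UNIV"
proof (rule add_subgroup_real_eq_UNIV_if_interval[where e = 1])
  have "\<bar>t\<bar> \<in> T"
    using add_subgroup_abs_mem assms by blast
  then have "s \<in> T" if "s > 0" for s
    using cone[of "s / \<bar>t\<bar>" "\<bar>t\<bar>"] \<open>t \<noteq> 0\<close> that by simp
  then show "{0..1} \<subseteq> T"
    using add_subgroup.zero_mem[OF \<open>add_subgroup T\<close>] by (force simp: le_less)
qed (use assms in auto)

definition rotz :: "real \<Rightarrow> real \<Rightarrow> real^3^3" where
  "rotz c s = vector [vector [c, -s, 0], vector [s, c, 0], vector [0, 0, 1]]"

definition roty :: "real \<Rightarrow> real \<Rightarrow> real^3^3" where
  "roty c s = vector [vector [c, 0, s], vector [0, 1, 0], vector [-s, 0, c]]"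

definition rotx :: "real \<Rightarrow> real \<Rightarrow> real^3^3" where
  "rotx c s = vector [vector [1, 0, 0], vector [0, c, -s], vector [0, s, c]]"

lemma mat_1_in_SO3: "mat 1 \<in> SO3"
  by (simp add: SO3_def orthogonal_matrix_id)

lemma rotz_in_SO3: "c\<^sup>2 + s\<^sup>2 = 1 \<Longrightarrow> rotz c s \<in> SO3"
  unfolding SO3_def orthogonal_matrix power2_eq_square
  by (simp add: vec_eq_iff forall_3 matrix_matrix_mult_def transpose_def mat_def sum_3 det_3
      rotz_def add.commute)

lemma roty_in_SO3: "c\<^sup>2 + s\<^sup>2 = 1 \<Longrightarrow> roty c s \<in> SO3"
  unfolding SO3_def orthogonal_matrix power2_eq_square
  by (simp add: vec_eq_iff forall_3 matrix_matrix_mult_def transpose_def mat_def sum_3 det_3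
      roty_def add.commute)

lemma rotx_in_SO3: "c\<^sup>2 + s\<^sup>2 = 1 \<Longrightarrow> rotx c s \<in> SO3"
  unfolding SO3_def orthogonal_matrix power2_eq_square
  by (simp add: vec_eq_iff forall_3 matrix_matrix_mult_def transpose_def mat_def sum_3 det_3
      rotx_def add.commute)

lemma rotz_mult_vector: "rotz c s *v v = vector [c * v$1 - s * v$2, s * v$1 + c * v$2, v$3]"
  by (simp add: rotz_def vec_eq_iff forall_3 matrix_vector_mult_def sum_3)

lemma roty_mult_vector: "roty c s *v v = vector [c * v$1 + s * v$3, v$2, c * v$3 - s * v$1]"
  by (simp add: roty_def vec_eq_iff forall_3 matrix_vector_mult_def sum_3)

lemma rotx_mult_vector: "rotx c s *v v = vector [v$1, c * v$2 - s * v$3, s * v$2 + c * v$3]"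
  by (simp add: rotx_def vec_eq_iff forall_3 matrix_vector_mult_def sum_3)

locale rotation_invariant_subgroup = add_subgroup P for P :: "(real^3) set" +
  assumes rotation_mem: "S \<in> SO3 \<Longrightarrow> x \<in> P \<Longrightarrow> S *v x \<in> P"
begin

lemma nonzero_mem_horizontal:
  assumes "p \<in> P" "p \<noteq> 0"
  obtains a b where "vector [a, b, 0] \<in> P" "a \<noteq> 0 \<or> b \<noteq> 0"
proof (cases "p$1 \<noteq> 0 \<or> p$2 \<noteq> 0")
  case True
  have "p - rotz (-1) 0 *v p \<in> P"
    using diff_mem[OF \<open>p \<in> P\<close> rotation_mem[OF rotz_in_SO3 \<open>p \<in> P\<close>]] by simp
  moreover have "p - rotz (-1) 0 *v p = vector [2 * p$1, 2 * p$2, 0]"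
    by (simp add: rotz_mult_vector vec_eq_iff forall_3)
  ultimately show ?thesis using that True by auto
next
  case False
  then have "p$3 \<noteq> 0" using \<open>p \<noteq> 0\<close> by (auto simp: vec_eq_iff forall_3)
  have "rotx 0 1 *v p \<in> P" by (rule rotation_mem[OF rotx_in_SO3 \<open>p \<in> P\<close>]) simp
  moreover have "rotx 0 1 *v p = vector [0, - p$3, 0]" using False
    by (simp add: rotx_mult_vector vec_eq_iff forall_3)
  ultimately show ?thesis using that \<open>p$3 \<noteq> 0\<close> by auto
qed

lemma nonzero_mem_axis:
  assumes "p \<in> P" "p \<noteq> 0"
  obtains r where "r > 0" "vector [r, 0, 0] \<in> P"
proof -
  obtain a b where ab: "vector [a, b, 0] \<in> P" "a \<noteq> 0 \<or> b \<noteq> 0"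
    using nonzero_mem_horizontal[OF assms] .
  define r where "r = sqrt (a\<^sup>2 + b\<^sup>2)"
  have "a\<^sup>2 + b\<^sup>2 > 0" using ab(2) by (auto simp: add_pos_nonneg add_nonneg_pos)
  then have "r > 0" and r_sq: "r\<^sup>2 = a\<^sup>2 + b\<^sup>2" by (simp_all add: r_def)
  have "(a/r)\<^sup>2 + (-b/r)\<^sup>2 = 1"
    using \<open>a\<^sup>2 + b\<^sup>2 > 0\<close> ab(2) by (simp add: r_sq power_divide flip: add_divide_distrib)
  moreover have "rotz (a/r) (-b/r) *v vector [a, b, 0] = vector [r, 0, 0]"
    using \<open>r > 0\<close> r_sq by (simp add: rotz_mult_vector vec_eq_iff forall_3 field_simps power2_eq_square)
  ultimately have "vector [r, 0, 0] \<in> P"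
    using rotation_mem[OF rotz_in_SO3 ab(1)] by metis
  with \<open>r > 0\<close> show thesis ..
qed

lemma axis_mem:
  assumes "p \<in> P" "p \<noteq> 0"
  shows "vector [x, 0, 0] \<in> P"
proof -
  obtain r where "r > 0" and r_axis: "vector [r, 0, 0] \<in> P"
    using nonzero_mem_axis[OF assms] .
  have "(\<lambda>x::real. vector [x, 0, 0] :: real^3) -` P = UNIV"
  proof (rule add_subgroup_real_eq_UNIV_if_interval[where e = "2 * r"])
    show "add_subgroup ((\<lambda>x::real. vector [x, 0, 0] :: real^3) -` P)"
      by (rule add_subgroup_vimage) (unfold_locales, simp_all add: vec_eq_iff forall_3)
    show "{0..2 * r} \<subseteq> (\<lambda>x. vector [x, 0, 0]) -` P"
    proof
      \<comment> \<open>two rotations of \<open>(r, 0, 0)\<close> by \<open>\<plusminus>\<theta>\<close> sum to \<open>(2 r cos \<theta>, 0, 0)\<close>\<close>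
      fix x assume "x \<in> {0..2 * r}"
      define c where "c = x / (2 * r)"
      define s where "s = sqrt (1 - c\<^sup>2)"
      have "0 \<le> c" "c \<le> 1" using \<open>x \<in> {0..2 * r}\<close> \<open>r > 0\<close> by (auto simp: c_def field_simps)
      then have "c\<^sup>2 + s\<^sup>2 = 1" "c\<^sup>2 + (-s)\<^sup>2 = 1" by (auto simp: s_def power_le_one)
      then have "rotz c s *v vector [r, 0, 0] + rotz c (-s) *v vector [r, 0, 0] \<in> P"
        by (intro add_mem rotation_mem rotz_in_SO3 r_axis)
      moreover have "rotz c s *v vector [r, 0, 0] + rotz c (-s) *v vector [r, 0, 0] = vector [x, 0, 0]"
        using \<open>r > 0\<close> by (simp add: rotz_mult_vector vec_eq_iff forall_3 c_def field_simps)
      ultimately show "x \<in> (\<lambda>x. vector [x, 0, 0]) -` P" by simp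
    qed
  qed (use \<open>r > 0\<close> in simp)
  then show ?thesis by auto
qed

lemma eq_UNIV_if_nonzero_mem:
  assumes "p \<in> P" "p \<noteq> 0"
  shows "P = UNIV"
proof -
  have "v \<in> P" for v :: "real^3"
  proof -
    have "vector [v$1, 0, 0] + rotz 0 1 *v vector [v$2, 0, 0] + roty 0 (-1) *v vector [v$3, 0, 0] \<in> P"
      by (intro add_mem rotation_mem rotz_in_SO3 roty_in_SO3 axis_mem[OF assms]) simp_all
    moreover have "vector [v$1, 0, 0] + rotz 0 1 *v vector [v$2, 0, 0] + roty 0 (-1) *v vector [v$3, 0, 0] = v"
      by (simp add: rotz_mult_vector roty_mult_vector vec_eq_iff forall_3)
    ultimately show ?thesis by simp
  qed
  then show ?thesis by blast
qed

end

lemma translation_invariant_iff_diff: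
  fixes R :: "'a::ab_group_add \<Rightarrow> 'a \<Rightarrow> bool"
  assumes translation: "\<And>x y b. R x y \<Longrightarrow> R (x + b) (y + b)"
  shows "R x y \<longleftrightarrow> R 0 (y - x)"
  using translation[of x y "- x"] translation[of 0 "y - x" x] by auto

lemma translation_invariant_equivp_add_subgroup:
  fixes R :: "'a::ab_group_add \<Rightarrow> 'a \<Rightarrow> bool"
  assumes "equivp R" and translation: "\<And>x y b. R x y \<Longrightarrow> R (x + b) (y + b)"
  shows "add_subgroup {d. R 0 d}"
proof
  show "0 \<in> {d. R 0 d}"
    using equivp_reflp[OF \<open>equivp R\<close>] by simp
  show "x + y \<in> {d. R 0 d}" if "x \<in> {d. R 0 d}" "y \<in> {d. R 0 d}" for x y
    using translation[of 0 y x] that equivp_transp[OF \<open>equivp R\<close>] by (auto simp: add.commute)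
  show "- x \<in> {d. R 0 d}" if "x \<in> {d. R 0 d}" for x
    using translation[of 0 x "- x"] that equivp_symp[OF \<open>equivp R\<close>] by auto
qed

lemma invariant_underD: "invariant_under G R \<Longrightarrow> g \<in> G \<Longrightarrow> R x y \<Longrightarrow> R (g x) (g y)"
  unfolding invariant_under_def by blast

lemma translation_in_galilei_group: "(\<lambda>x. x + b) \<in> galilei_group"
proof -
  have "(\<lambda>x. x + b) = galilei_map (mat 1) 0 (fst b) (snd b)"
    by (simp add: galilei_map_def fun_eq_iff prod_eq_iff)
  then show ?thesis
    unfolding galilei_group_def using mat_1_in_SO3 by blast
qed

lemma boost_rotation_in_galilei_group:
  assumes "S \<in> SO3"
  shows "(\<lambda>(p, t). (S *v p + t *\<^sub>R w, t)) \<in> galilei_group"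
proof -
  have "(\<lambda>(p, t). (S *v p + t *\<^sub>R w, t)) = galilei_map S w 0 0"
    by (simp add: galilei_map_def)
  then show ?thesis
    unfolding galilei_group_def using assms by blast
qed

locale galilei_invariant_subgroup = add_subgroup H for H :: "pt set" +
  assumes boost_rotation_mem: "S \<in> SO3 \<Longrightarrow> (p, t) \<in> H \<Longrightarrow> (S *v p + t *\<^sub>R w, t) \<in> H"
begin

lemma eq_time_subgroup:
  assumes "(p, t) \<in> H" "t \<noteq> 0"
  shows "H = {d. (0, snd d) \<in> H}"
proof -
  have slice: "(q, t) \<in> H" for q
    using boost_rotation_mem[OF mat_1_in_SO3 assms(1), of "(1 / t) *\<^sub>R (q - p)"] \<open>t \<noteq> 0\<close>
    by simp
  have space: "(q, 0) \<in> H" for q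
    using diff_mem[OF slice[of q] slice[of 0]] by simp
  have "d \<in> H \<longleftrightarrow> (0, snd d) \<in> H" for d
    using add_mem[OF space[of "fst d"], of "(0, snd d)"] diff_mem[OF _ space[of "fst d"], of d]
    by (cases d) auto
  then show ?thesis by blast
qed

lemma eq_zero_or_eq_space:
  assumes static: "\<And>d. d \<in> H \<Longrightarrow> snd d = 0"
  shows "H = {0} \<or> H = {d. snd d = 0}"
proof (cases "\<exists>p. p \<noteq> 0 \<and> (p, 0) \<in> H")
  case True
  then obtain p where "p \<noteq> 0" "(p, 0) \<in> H" by blast
  have "rotation_invariant_subgroup ((\<lambda>p. (p, 0)) -` H)"
  proof (intro rotation_invariant_subgroup.intro rotation_invariant_subgroup_axioms.intro)
    show "add_subgroup ((\<lambda>p. (p, 0)) -` H)"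
      by (rule add_subgroup_vimage) (unfold_locales, simp)
  qed (use boost_rotation_mem[where t = 0] in simp)
  then have "(\<lambda>p. (p, 0)) -` H = UNIV"
    using \<open>p \<noteq> 0\<close> \<open>(p, 0) \<in> H\<close> by (intro rotation_invariant_subgroup.eq_UNIV_if_nonzero_mem) auto
  then have "H = {d. snd d = 0}"
    using static by (force simp: set_eq_iff)
  then show ?thesis ..
next
  case False
  then have "H = {0}"
    using static zero_mem by (force simp: zero_prod_def)
  then show ?thesis ..
qed

end

lemma galilei_invariant_equivp_cases:
  assumes "equivp R" and invariant: "invariant_under galilei_group R"
  obtains "R = (=)"
    | "R = newtonian_sim"
    | T t where "add_subgroup T" "t \<in> T" "t \<noteq> 0" "R = (\<lambda>x y. snd y - snd x \<in> T)"
proof -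
  define H where "H = {d. R 0 d}"
  have translation: "R (x + b) (y + b)" if "R x y" for x y b
    using invariant_underD[OF invariant translation_in_galilei_group that] by simp
  have R_iff: "R x y \<longleftrightarrow> y - x \<in> H" for x y
    using translation_invariant_iff_diff[where R = R, OF translation] by (simp add: H_def)
  have "galilei_invariant_subgroup H"
  proof (intro galilei_invariant_subgroup.intro galilei_invariant_subgroup_axioms.intro)
    show "add_subgroup H"
      unfolding H_def by (rule translation_invariant_equivp_add_subgroup[OF \<open>equivp R\<close> translation])
    show "(S *v p + t *\<^sub>R w, t) \<in> H" if "S \<in> SO3" "(p, t) \<in> H" for S p t w
      using invariant_underD[OF invariant boost_rotation_in_galilei_group[OF that(1), of w],
          of 0 "(p, t)"] that(2)
      by (simp add: H_def zero_prod_def)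
  qed
  then interpret H: galilei_invariant_subgroup H .
  show thesis
  proof (cases "\<exists>d \<in> H. snd d \<noteq> 0")
    case True
    then obtain p t where "(p, t) \<in> H" "t \<noteq> 0" by auto
    define T where "T = (\<lambda>t. (0, t)) -` H"
    have "add_subgroup T"
      unfolding T_def by (rule add_subgroup_vimage) (unfold_locales, simp)
    moreover have "H = {d. snd d \<in> T}"
      using H.eq_time_subgroup[OF \<open>(p, t) \<in> H\<close> \<open>t \<noteq> 0\<close>] by (simp add: T_def)
    ultimately show thesis
      using that(3)[of T t] \<open>(p, t) \<in> H\<close> \<open>t \<noteq> 0\<close> by (auto simp: R_iff fun_eq_iff)
  next
    case False
    then consider "H = {0}" | "H = {d. snd d = 0}"
      using H.eq_zero_or_eq_space by blast
    then show thesis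
      using that(1,2) by cases (auto simp: R_iff fun_eq_iff newtonian_sim_def)
  qed
qed

lemma dilation_in_conf_galilei_group:
  assumes "l > 0"
  shows "(\<lambda>x. l *\<^sub>R x) \<in> conf_galilei_group"
proof -
  have "(\<lambda>x. l *\<^sub>R x) = conf_galilei_map l (mat 1) 0 0 0"
    by (simp add: conf_galilei_map_def fun_eq_iff prod_eq_iff)
  then show ?thesis
    unfolding conf_galilei_group_def using assms mat_1_in_SO3 by blast
qed

lemma galilei_invariant_equivp_eq_newtonian_sim:
  assumes "equivp R" "invariant_under galilei_group R" and nontrivial: "\<not> trivial_rel R"
    and regular: "(\<forall>x. connected {y. R x y}) \<or> invariant_under conf_galilei_group R"
  shows "R = newtonian_sim"
  using assms(1,2)
proof (cases rule: galilei_invariant_equivp_cases)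
  case 1
  then show ?thesis using nontrivial by (simp add: trivial_rel_def)
next
  case 2
  then show ?thesis .
next
  case (3 T t)
  have "T = UNIV"
    using regular
  proof
    assume "\<forall>x. connected {y. R x y}"
    then have "connected {y. R 0 y}" ..
    then have "connected (snd ` {y. R 0 y})"
      by (intro connected_continuous_image continuous_intros)
    moreover have "snd ` {y. R 0 y} = T"
      using 3(4) by (force simp: image_iff)
    ultimately show ?thesis
      using add_subgroup_real_eq_UNIV_if_connected 3(1-3) by metis
  next
    assume dilation_invariant: "invariant_under conf_galilei_group R"
    show ?thesis
    proof (rule add_subgroup_real_eq_UNIV_if_cone[OF 3(1) _ 3(2,3)])
      fix l x :: real
      assume "l > 0" "x \<in> T"
      then have "R 0 (0, x)"
        using 3(4) by simp
      from invariant_underD[OF dilation_invariant dilation_in_conf_galilei_group[OF \<open>l > 0\<close>] this]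
      show "l * x \<in> T"
        using 3(4) by simp
    qed
  qed
  then have "R = (\<lambda>x y. True)"
    using 3(4) by simp
  with nontrivial show ?thesis
    by (simp add: trivial_rel_def)
qed

lemma equivp_newtonian_sim: "equivp newtonian_sim"
  by (rule equivpI) (auto simp: reflp_def symp_def transp_def newtonian_sim_def)

lemma newtonian_sim_invariant_galilei: "invariant_under galilei_group newtonian_sim"
  by (auto simp: invariant_under_def galilei_group_def newtonian_sim_def galilei_map_def case_prod_beta)

lemma newtonian_sim_invariant_conf_galilei: "invariant_under conf_galilei_group newtonian_sim"
  by (auto simp: invariant_under_def conf_galilei_group_def newtonian_sim_def conf_galilei_map_def
      case_prod_beta)

lemma not_trivial_rel_newtonian_sim: "\<not> trivial_rel newtonian_sim"
proof -
  have "\<not> newtonian_sim (0, 0) (0, 1)" and "newtonian_sim (0, 0) (vec 1, 0)"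
    by (simp_all add: newtonian_sim_def)
  moreover have "((0::real^3), (0::real)) \<noteq> (vec 1, 0)"
    by (simp add: vec_eq_iff)
  ultimately show ?thesis
    unfolding trivial_rel_def fun_eq_iff by blast
qed

theorem proposition3p7:
  "{R :: pt \<Rightarrow> pt \<Rightarrow> bool.
      equivp R \<and> invariant_under galilei_group R \<and> \<not> trivial_rel R \<and>
      ((\<forall>x. connected {y. R x y}) \<or> invariant_under conf_galilei_group R)}
   = {newtonian_sim}"
  using galilei_invariant_equivp_eq_newtonian_sim equivp_newtonian_sim
    newtonian_sim_invariant_galilei newtonian_sim_invariant_conf_galilei
    not_trivial_rel_newtonian_sim
  by blast

end
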